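(* Let $(X_B,X_C,X_R)$ be an OCC of a graph $G$, let $f_X \colon X_B\to\{0,1\}$ be a proper $2$-coloring of $G[X_B]$, and let $B^\ast \subseteq X_B$ satisfy property $(\star)$ with respect to $G$, $(X_B,X_C,X_R)$ and $f_X$. Let $C_1, C_2 \subseteq X_C$ be disjoint and let $f_C \colon C_1 \to \{0,1\}$ be an arbitrary (not necessarily proper) $2$-coloring. Define $A := \{b \in X_B : b$ has a neighbor $c \in C_1$ with $f_X(b) = f_C(c)\}$, $R := \{b \in X_B : b$ has a neighbor $c \in C_1$ with $f_X(b) \neq f_C(c)\}$, and $N := N_G(C_2) \cap X_B$. If $G[X_B]$ has an $\{A,R,N\}$-separator of size at most $|X_C|$, then $B^\ast$ contains a minimum-size $\{A,R,N\}$-separator of $G[X_B]$.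
   Context: An odd cycle cut (OCC) of $G$ is a partition $(X_B, X_C, X_R)$ of $V(G)$ such that $G[X_B]$ is bipartite, there is no edge between $X_B$ and $X_R$, and $X_B \cup X_C \neq \emptyset$. A vertex set $X$ separates vertex sets $S,T$ in a graph if no connected component of the graph minus $X$ contains both a vertex of $S$ and a vertex of $T$ ($X$ may intersect $S\cup T$); a $\{T_1,\dots,T_m\}$-separator separates $T_i$ and $T_j$ for all $i\ne j$. Auxiliary graph: $G_{\mathrm{aux}}$ is obtained from a copy of $G[X_B]$ by adding, for each $v \in X_C$, two new vertices $v^{(0)}, v^{(1)}$, and for each $u \in N_G(v) \cap X_B$ the edge $v^{(f_X(u))}u$; let $T := \{v^{(i)} : v \in X_C, i \in \{0,1\}\}$, so $|T| = 2|X_C|$. Property $(\star)$ of a set $B^\ast \subseteq X_B$: for every partition $(T_1,T_2,T_3,T_X)$ of $T$ into four possibly empty parts, if there exists $S \subseteq X_B$ with $|S| \le |T|$ such that $S$ separates $T_i$ and $T_j$ in $G_{\mathrm{aux}} - T_X$ for all $1 \le i < j \le 3$, then $B^\ast$ contains such a set $S$ of minimum possible size. (Such a $B^\ast$ with $|B^\ast| = |X_C|^{\mathcal{O}(1)}$ is computable in time $2^{\mathcal{O}(|X_C|)} n^{\mathcal{O}(1)}$.) *)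

theory Defs
  imports Main
begin

definition simple_graph :: "'a set \<Rightarrow> ('a \<Rightarrow> 'a \<Rightarrow> bool) \<Rightarrow> bool" where
  "simple_graph V E \<longleftrightarrow> finite V \<and> (\<forall>u v. E u v \<longrightarrow> E v u) \<and> (\<forall>u. \<not> E u u)
     \<and> (\<forall>u v. E u v \<longrightarrow> u \<in> V \<and> v \<in> V)"

definition reach_in :: "'v set \<Rightarrow> ('v \<Rightarrow> 'v \<Rightarrow> bool) \<Rightarrow> 'v \<Rightarrow> 'v \<Rightarrow> bool" where
  "reach_in W E s t \<longleftrightarrow> s \<in> W \<and> t \<in> W \<and> (\<lambda>x y. x \<in> W \<and> y \<in> W \<and> E x y)\<^sup>*\<^sup>* s t"

text \<open>X separates S and T in the graph (W, E): no connected component of the graph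
  minus X contains a vertex of S and a vertex of T (X may intersect S and T).\<close>
definition separates :: "'v set \<Rightarrow> ('v \<Rightarrow> 'v \<Rightarrow> bool) \<Rightarrow> 'v set \<Rightarrow> 'v set \<Rightarrow> 'v set \<Rightarrow> bool" where
  "separates W E X S T \<longleftrightarrow> (\<forall>s\<in>S. \<forall>t\<in>T. \<not> reach_in (W - X) E s t)"

definition separator3 :: "'v set \<Rightarrow> ('v \<Rightarrow> 'v \<Rightarrow> bool) \<Rightarrow> 'v set \<Rightarrow> 'v set \<Rightarrow> 'v set \<Rightarrow> 'v set \<Rightarrow> bool" where
  "separator3 W E X T1 T2 T3 \<longleftrightarrow>
     separates W E X T1 T2 \<and> separates W E X T1 T3 \<and> separates W E X T2 T3"

definition proper_2col :: "'a set \<Rightarrow> ('a \<Rightarrow> 'a \<Rightarrow> bool) \<Rightarrow> ('a \<Rightarrow> nat) \<Rightarrow> bool" where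
  "proper_2col W E f \<longleftrightarrow> (\<forall>u\<in>W. f u \<in> {0,1}) \<and> (\<forall>u\<in>W. \<forall>w\<in>W. E u w \<longrightarrow> f u \<noteq> f w)"

definition bipartite_induced :: "'a set \<Rightarrow> ('a \<Rightarrow> 'a \<Rightarrow> bool) \<Rightarrow> bool" where
  "bipartite_induced W E \<longleftrightarrow> (\<exists>f. proper_2col W E f)"

definition is_OCC :: "'a set \<Rightarrow> ('a \<Rightarrow> 'a \<Rightarrow> bool) \<Rightarrow> 'a set \<Rightarrow> 'a set \<Rightarrow> 'a set \<Rightarrow> bool" where
  "is_OCC V E XB XC XR \<longleftrightarrow>
     XB \<union> XC \<union> XR = V \<and> XB \<inter> XC = {} \<and> XB \<inter> XR = {} \<and> XC \<inter> XR = {}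
     \<and> bipartite_induced XB E
     \<and> (\<forall>u\<in>XB. \<forall>w\<in>XR. \<not> E u w)
     \<and> XB \<union> XC \<noteq> {}"

text \<open>Vertices of the auxiliary graph: copies of X_B vertices, and v^(i) for v in X_C.\<close>
datatype 'a auxv = Orig 'a | Copy 'a nat

definition aux_T :: "'a set \<Rightarrow> 'a auxv set" where
  "aux_T XC = {Copy v i | v i. v \<in> XC \<and> i \<in> {0, 1}}"

definition aux_V :: "'a set \<Rightarrow> 'a set \<Rightarrow> 'a auxv set" where
  "aux_V XB XC = Orig ` XB \<union> aux_T XC"

definition aux_E :: "('a \<Rightarrow> 'a \<Rightarrow> bool) \<Rightarrow> 'a set \<Rightarrow> 'a set \<Rightarrow> ('a \<Rightarrow> nat)
    \<Rightarrow> 'a auxv \<Rightarrow> 'a auxv \<Rightarrow> bool" where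
  "aux_E E XB XC fX x y \<longleftrightarrow>
     (\<exists>u w. x = Orig u \<and> y = Orig w \<and> u \<in> XB \<and> w \<in> XB \<and> E u w)
   \<or> (\<exists>v u. x = Copy v (fX u) \<and> y = Orig u \<and> v \<in> XC \<and> u \<in> XB \<and> E v u)
   \<or> (\<exists>v u. y = Copy v (fX u) \<and> x = Orig u \<and> v \<in> XC \<and> u \<in> XB \<and> E v u)"

definition aux_sep :: "('a \<Rightarrow> 'a \<Rightarrow> bool) \<Rightarrow> 'a set \<Rightarrow> 'a set \<Rightarrow> ('a \<Rightarrow> nat)
    \<Rightarrow> 'a auxv set \<Rightarrow> 'a auxv set \<Rightarrow> 'a auxv set \<Rightarrow> 'a auxv set \<Rightarrow> 'a set \<Rightarrow> bool" where
  "aux_sep E XB XC fX T1 T2 T3 TX S \<longleftrightarrow>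
     separator3 (aux_V XB XC - TX) (aux_E E XB XC fX) (Orig ` S) T1 T2 T3"

definition property_star :: "('a \<Rightarrow> 'a \<Rightarrow> bool) \<Rightarrow> 'a set \<Rightarrow> 'a set \<Rightarrow> ('a \<Rightarrow> nat)
    \<Rightarrow> 'a set \<Rightarrow> bool" where
  "property_star E XB XC fX Bstar \<longleftrightarrow>
    (\<forall>T1 T2 T3 TX.
       T1 \<union> T2 \<union> T3 \<union> TX = aux_T XC \<and>
       T1 \<inter> T2 = {} \<and> T1 \<inter> T3 = {} \<and> T1 \<inter> TX = {} \<and>
       T2 \<inter> T3 = {} \<and> T2 \<inter> TX = {} \<and> T3 \<inter> TX = {} \<longrightarrow>
       (\<exists>S. S \<subseteq> XB \<and> card S \<le> card (aux_T XC) \<and> aux_sep E XB XC fX T1 T2 T3 TX S) \<longrightarrow>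
       (\<exists>S. S \<subseteq> Bstar \<and> aux_sep E XB XC fX T1 T2 T3 TX S \<and>
            (\<forall>S'. S' \<subseteq> XB \<and> aux_sep E XB XC fX T1 T2 T3 TX S' \<longrightarrow> card S \<le> card S')))"

end

theory Submission imports Defs begin

text \<open>In the auxiliary graph the copy of colour \<open>i\<close> of \<open>v \<in> X\<^sub>C\<close> is adjacent exactly to the
  neighbours of \<open>v\<close> in \<open>X\<^sub>B\<close> of colour \<open>i\<close>. Let \<open>T\<^sub>1\<close> consist of the copies of colour \<open>f\<^sub>C(c)\<close>
  and \<open>T\<^sub>2\<close> of the other copies of the vertices \<open>c \<in> C\<^sub>1\<close>, let \<open>T\<^sub>3\<close> consist of both copies of
  every \<open>c \<in> C\<^sub>2\<close>, and let \<open>T\<^sub>X\<close> be the remaining copies. Then the neighbourhoods of \<open>T\<^sub>1\<close>,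
  \<open>T\<^sub>2\<close>, \<open>T\<^sub>3\<close> in \<open>X\<^sub>B\<close> are \<open>A\<close>, \<open>R\<close>, \<open>N\<close>, and a set \<open>S\<close> pairwise separates the \<open>T\<^sub>i\<close> in
  \<open>G\<^sub>a\<^sub>u\<^sub>x - T\<^sub>X\<close> iff it pairwise separates their neighbourhoods in \<open>G[X\<^sub>B]\<close>: a path between
  neighbourhoods extends by one edge at each end, and conversely a path leaving \<open>T\<^sub>i\<close> can only
  enter another terminal class from a vertex reachable from the neighbourhood of \<open>T\<^sub>i\<close>.
  As \<open>|X\<^sub>C| \<le> |T|\<close>, property \<open>(\<star>)\<close> for this partition of \<open>T\<close> gives the claim.\<close>

lemma symp_commute: "symp E \<Longrightarrow> E x y \<longleftrightarrow> E y x"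
  by (blast dest: sympD)

lemma reach_in_refl: "x \<in> W \<Longrightarrow> reach_in W E x x"
  by (simp add: reach_in_def)

lemma reach_in_sym:
  assumes "symp E" and "reach_in W E x y"
  shows "reach_in W E y x"
proof -
  let ?R = "\<lambda>u v. u \<in> W \<and> v \<in> W \<and> E u v"
  have "?R\<^sup>*\<^sup>* x y" using assms(2) by (simp add: reach_in_def)
  then have "?R\<^sup>*\<^sup>* y x"
    by (induction rule: rtranclp_induct)
      (auto intro: converse_rtranclp_into_rtranclp dest: sympD[OF assms(1)])
  then show ?thesis using assms(2) by (simp add: reach_in_def)
qed

lemma separates_sym:
  assumes "symp E" and "separates W E X S T"
  shows "separates W E X T S"
  using assms reach_in_sym unfolding separates_def by metis

lemma reach_in_extend_left:
  "reach_in W E x y \<Longrightarrow> t \<in> W \<Longrightarrow> E t x \<Longrightarrow> reach_in W E t y"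
  unfolding reach_in_def by (auto intro: converse_rtranclp_into_rtranclp)

lemma reach_in_extend_right:
  "reach_in W E x y \<Longrightarrow> t \<in> W \<Longrightarrow> E y t \<Longrightarrow> reach_in W E x t"
  unfolding reach_in_def by (auto intro: rtranclp.rtrancl_into_rtrancl)

lemma reach_in_closed:
  assumes "reach_in W E x y" and "x \<in> P"
    and closed: "\<And>u v. u \<in> P \<Longrightarrow> u \<in> W \<Longrightarrow> v \<in> W \<Longrightarrow> E u v \<Longrightarrow> v \<in> P"
  shows "y \<in> P"
proof -
  have "(\<lambda>u v. u \<in> W \<and> v \<in> W \<and> E u v)\<^sup>*\<^sup>* x y" using assms(1) by (simp add: reach_in_def)
  then show ?thesis by (induction rule: rtranclp_induct) (auto intro: assms(2) closed)
qed

lemma reach_in_map: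
  assumes "reach_in U E a b" and "g ` U \<subseteq> W"
    and edges: "\<And>u v. u \<in> U \<Longrightarrow> v \<in> U \<Longrightarrow> E u v \<Longrightarrow> F (g u) (g v)"
  shows "reach_in W F (g a) (g b)"
proof -
  let ?R = "\<lambda>u v. u \<in> W \<and> v \<in> W \<and> F u v"
  have "(\<lambda>u v. u \<in> U \<and> v \<in> U \<and> E u v)\<^sup>*\<^sup>* a b" using assms(1) by (simp add: reach_in_def)
  then have "?R\<^sup>*\<^sup>* (g a) (g b)"
  proof (induction rule: rtranclp_induct)
    case (step y z)
    then show ?case using assms(2) edges by (auto intro: rtranclp.rtrancl_into_rtrancl)
  qed simp
  then show ?thesis using assms(1,2) by (auto simp: reach_in_def)
qed

lemma separator3_iff_pairwise:
  assumes "symp E"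
  shows "separator3 W E X T1 T2 T3 \<longleftrightarrow>
    (\<forall>i\<in>{0, 1, 2 :: nat}. \<forall>j\<in>{0, 1, 2}. i \<noteq> j \<longrightarrow>
      separates W E X ([T1, T2, T3] ! i) ([T1, T2, T3] ! j))"
  using separates_sym[OF assms] by (auto simp: separator3_def)

lemma aux_E_simps [simp]:
  "aux_E E XB XC fX (Orig u) (Orig w) \<longleftrightarrow> u \<in> XB \<and> w \<in> XB \<and> E u w"
  "aux_E E XB XC fX (Copy v i) (Orig u) \<longleftrightarrow> v \<in> XC \<and> u \<in> XB \<and> E v u \<and> fX u = i"
  "aux_E E XB XC fX (Orig u) (Copy v i) \<longleftrightarrow> v \<in> XC \<and> u \<in> XB \<and> E v u \<and> fX u = i"
  "\<not> aux_E E XB XC fX (Copy v i) (Copy w j)"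
  by (auto simp: aux_E_def)

lemma symp_aux_E:
  assumes "symp E"
  shows "symp (aux_E E XB XC fX)"
proof (rule sympI)
  fix x y assume "aux_E E XB XC fX x y"
  then show "aux_E E XB XC fX y x" using assms by (cases x; cases y) (auto dest: sympD)
qed

lemma Copy_in_aux_T_iff [simp]: "Copy v i \<in> aux_T C \<longleftrightarrow> v \<in> C \<and> i \<in> {0, 1}"
  and Orig_notin_aux_T [simp]: "Orig u \<notin> aux_T C"
  by (auto simp: aux_T_def)

lemma card_le_card_aux_T: "card XC \<le> card (aux_T XC)"
proof (cases "finite XC")
  case True
  have "aux_T XC = (\<lambda>(v, i). Copy v i) ` (XC \<times> {0, 1})" by (auto simp: aux_T_def)
  then have "finite (aux_T XC)" using True by simp
  moreover have "(\<lambda>v. Copy v 0) ` XC \<subseteq> aux_T XC" by auto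
  moreover have "inj_on (\<lambda>v. Copy v (0::nat)) XC" by (rule inj_onI) simp
  ultimately show ?thesis by (metis card_image card_mono)
qed simp

definition aux_neighbours ::
    "('a \<Rightarrow> 'a \<Rightarrow> bool) \<Rightarrow> 'a set \<Rightarrow> 'a set \<Rightarrow> ('a \<Rightarrow> nat) \<Rightarrow> 'a auxv set \<Rightarrow> 'a set" where
  "aux_neighbours E XB XC fX T = {u. \<exists>t\<in>T. aux_E E XB XC fX t (Orig u)}"

lemma aux_V_minus_unused_terminals:
  assumes "\<And>i. i \<in> I \<Longrightarrow> T i \<subseteq> aux_T XC"
  shows "aux_V XB XC - (aux_T XC - \<Union>(T ` I)) - Orig ` S = Orig ` (XB - S) \<union> \<Union>(T ` I)"
  using assms by (auto simp: aux_V_def) (metis Orig_notin_aux_T subsetD)+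

lemma separates_aux_neighbours_if_separates_terminals:
  assumes "separates (Orig ` (XB - S) \<union> Z) (aux_E E XB XC fX) {} T T'"
    and "T \<subseteq> Z" and "T' \<subseteq> Z" and "\<And>t. t \<in> T' \<Longrightarrow> \<exists>v i. t = Copy v i"
  shows "separates XB E S (aux_neighbours E XB XC fX T) (aux_neighbours E XB XC fX T')"
  unfolding separates_def
proof (intro ballI notI)
  let ?W = "Orig ` (XB - S) \<union> Z" and ?F = "aux_E E XB XC fX"
  fix a b assume "a \<in> aux_neighbours E XB XC fX T" "b \<in> aux_neighbours E XB XC fX T'"
    and ab: "reach_in (XB - S) E a b"
  then obtain t t' where t: "t \<in> T" "?F t (Orig a)" and t': "t' \<in> T'" "?F t' (Orig b)"
    by (auto simp: aux_neighbours_def)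
  have "?F (Orig b) t'" using t' assms(4) by fastforce
  moreover have "reach_in ?W ?F (Orig a) (Orig b)"
    by (rule reach_in_map[OF ab]) (auto simp: reach_in_def)
  ultimately have "reach_in ?W ?F t t'"
    using t t' assms(2,3) by (blast intro: reach_in_extend_left reach_in_extend_right)
  then show False using assms(1) t t' by (auto simp: separates_def)
qed

lemma separates_terminals_if_separates_aux_neighbours:
  assumes sep: "\<And>j. j \<in> I \<Longrightarrow> j \<noteq> i \<Longrightarrow>
      separates XB E S (aux_neighbours E XB XC fX (T i)) (aux_neighbours E XB XC fX (T j))"
    and copies: "\<And>k t. k \<in> I \<Longrightarrow> t \<in> T k \<Longrightarrow> \<exists>v n. t = Copy v n"
    and disj: "\<And>j. j \<in> I \<Longrightarrow> j \<noteq> i \<Longrightarrow> T i \<inter> T j = {}"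
    and "i \<in> I" and "j \<in> I" and "j \<noteq> i"
  shows "separates (Orig ` (XB - S) \<union> \<Union>(T ` I)) (aux_E E XB XC fX) {} (T i) (T j)"
  unfolding separates_def Diff_empty
proof (intro ballI notI)
  let ?W = "Orig ` (XB - S) \<union> \<Union>(T ` I)" and ?F = "aux_E E XB XC fX"
    and ?N = "aux_neighbours E XB XC fX"
  \<comment> \<open>invariant: everything reachable from \<open>T i\<close> is in \<open>T i\<close> or reachable from \<open>?N (T i)\<close> in \<open>G[X\<^sub>B] - S\<close>\<close>
  define P where "P = T i \<union> Orig ` {u. \<exists>a\<in>?N (T i). reach_in (XB - S) E a u}"
  have closed: "y \<in> P" if "x \<in> P" "x \<in> ?W" "y \<in> ?W" "?F x y" for x y
  proof (cases y)
    case (Orig w)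
    then have w: "w \<in> XB - S" using \<open>y \<in> ?W\<close> copies by fastforce
    show ?thesis
    proof (cases "x \<in> T i")
      case True
      then have "w \<in> ?N (T i)" using \<open>?F x y\<close> Orig by (auto simp: aux_neighbours_def)
      then show ?thesis using w Orig by (auto simp: P_def intro: reach_in_refl)
    next
      case False
      then obtain u a where "x = Orig u" "a \<in> ?N (T i)" "reach_in (XB - S) E a u"
        using \<open>x \<in> P\<close> by (auto simp: P_def)
      then show ?thesis using \<open>?F x y\<close> Orig w by (auto simp: P_def intro: reach_in_extend_right)
    qed
  next
    case (Copy v n)
    then obtain k where k: "k \<in> I" "y \<in> T k" using \<open>y \<in> ?W\<close> by auto
    have "x \<notin> T i" using \<open>?F x y\<close> Copy copies[OF \<open>i \<in> I\<close>] by fastforce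
    then obtain u a where u: "x = Orig u" "a \<in> ?N (T i)" "reach_in (XB - S) E a u"
      using \<open>x \<in> P\<close> by (auto simp: P_def)
    have "?F y x" using \<open>?F x y\<close> u(1) Copy by simp
    then have "u \<in> ?N (T k)" using k u(1) unfolding aux_neighbours_def by blast
    then have "k = i" using sep[OF k(1)] u by (auto simp: separates_def)
    then show ?thesis using k by (simp add: P_def)
  qed
  fix t t' assume "t \<in> T i" "t' \<in> T j" and tt': "reach_in ?W ?F t t'"
  have "t' \<in> P"
    by (rule reach_in_closed[OF tt' _ closed]) (use \<open>t \<in> T i\<close> in \<open>auto simp: P_def\<close>)
  then show False using \<open>t' \<in> T j\<close> copies[OF \<open>j \<in> I\<close>] disj[OF \<open>j \<in> I\<close> \<open>j \<noteq> i\<close>]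
    by (auto simp: P_def)
qed

lemma aux_pairwise_separation_iff:
  assumes T: "\<And>i. i \<in> I \<Longrightarrow> T i \<subseteq> aux_T XC"
    and disj: "\<And>i j. i \<in> I \<Longrightarrow> j \<in> I \<Longrightarrow> i \<noteq> j \<Longrightarrow> T i \<inter> T j = {}"
  shows "(\<forall>i\<in>I. \<forall>j\<in>I. i \<noteq> j \<longrightarrow>
      separates (aux_V XB XC - (aux_T XC - \<Union>(T ` I))) (aux_E E XB XC fX) (Orig ` S) (T i) (T j))
    \<longleftrightarrow> (\<forall>i\<in>I. \<forall>j\<in>I. i \<noteq> j \<longrightarrow>
      separates XB E S (aux_neighbours E XB XC fX (T i)) (aux_neighbours E XB XC fX (T j)))"
proof -
  have copies: "\<exists>v n. t = Copy v n" if "k \<in> I" "t \<in> T k" for k t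
    using T[OF that(1)] that(2) by (cases t) auto
  have "separates (aux_V XB XC - (aux_T XC - \<Union>(T ` I))) (aux_E E XB XC fX) (Orig ` S) U U'
      \<longleftrightarrow> separates (Orig ` (XB - S) \<union> \<Union>(T ` I)) (aux_E E XB XC fX) {} U U'" for U U'
    by (simp add: separates_def aux_V_minus_unused_terminals[where T = T, OF T])
  then show ?thesis
    using separates_aux_neighbours_if_separates_terminals[where Z = "\<Union>(T ` I)"]
      separates_terminals_if_separates_aux_neighbours[where I = I and T = T] copies disj
    by (metis UN_upper)
qed

definition agreeing_copies :: "('a \<Rightarrow> nat) \<Rightarrow> 'a set \<Rightarrow> 'a auxv set" where
  "agreeing_copies fC C = (\<lambda>c. Copy c (fC c)) ` C"

definition disagreeing_copies :: "('a \<Rightarrow> nat) \<Rightarrow> 'a set \<Rightarrow> 'a auxv set" where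
  "disagreeing_copies fC C = (\<lambda>c. Copy c (1 - fC c)) ` C"

lemma branch_terminals_subset_disjoint:
  assumes "C1 \<subseteq> XC" and "C2 \<subseteq> XC" and "C1 \<inter> C2 = {}" and "\<forall>c\<in>C1. fC c \<in> {0, 1}"
  shows "agreeing_copies fC C1 \<subseteq> aux_T XC" and "disagreeing_copies fC C1 \<subseteq> aux_T XC"
    and "aux_T C2 \<subseteq> aux_T XC"
    and "agreeing_copies fC C1 \<inter> disagreeing_copies fC C1 = {}"
    and "agreeing_copies fC C1 \<inter> aux_T C2 = {}" and "disagreeing_copies fC C1 \<inter> aux_T C2 = {}"
  using assms by (auto simp: agreeing_copies_def disagreeing_copies_def aux_T_def)

lemma aux_neighbours_agreeing_copies:
  assumes "C \<subseteq> XC" and "symp E"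
  shows "aux_neighbours E XB XC fX (agreeing_copies fC C) =
    {b \<in> XB. \<exists>c\<in>C. E b c \<and> fX b = fC c}"
  using assms by (auto simp: aux_neighbours_def agreeing_copies_def symp_commute[of E])

lemma aux_neighbours_disagreeing_copies:
  assumes "C \<subseteq> XC" and "symp E"
    and fX: "\<forall>b\<in>XB. fX b \<in> {0, 1}" and fC: "\<forall>c\<in>C. fC c \<in> {0, 1}"
  shows "aux_neighbours E XB XC fX (disagreeing_copies fC C) =
    {b \<in> XB. \<exists>c\<in>C. E b c \<and> fX b \<noteq> fC c}"
proof (intro set_eqI iffI)
  fix u assume "u \<in> aux_neighbours E XB XC fX (disagreeing_copies fC C)"
  then obtain c where "c \<in> C" "u \<in> XB" "E u c" "fX u = 1 - fC c"
    using assms(2) by (auto simp: aux_neighbours_def disagreeing_copies_def symp_commute[of E])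
  then show "u \<in> {b \<in> XB. \<exists>c\<in>C. E b c \<and> fX b \<noteq> fC c}" using fC by force
next
  fix u assume "u \<in> {b \<in> XB. \<exists>c\<in>C. E b c \<and> fX b \<noteq> fC c}"
  then obtain c where c: "c \<in> C" "u \<in> XB" "E u c" "fX u \<noteq> fC c" by blast
  then have "fX u = 1 - fC c" using fX fC by force
  then have "aux_E E XB XC fX (Copy c (1 - fC c)) (Orig u)"
    using c assms(1,2) by (auto simp: symp_commute[of E])
  then show "u \<in> aux_neighbours E XB XC fX (disagreeing_copies fC C)"
    using c(1) by (auto simp: aux_neighbours_def disagreeing_copies_def)
qed

lemma aux_neighbours_aux_T:
  assumes "C \<subseteq> XC" and "symp E" and fX: "\<forall>b\<in>XB. fX b \<in> {0, 1}"
  shows "aux_neighbours E XB XC fX (aux_T C) = {b \<in> XB. \<exists>c\<in>C. E b c}"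
proof (intro set_eqI iffI)
  fix u assume "u \<in> aux_neighbours E XB XC fX (aux_T C)"
  then show "u \<in> {b \<in> XB. \<exists>c\<in>C. E b c}"
    using assms(2) by (auto simp: aux_neighbours_def aux_T_def symp_commute[of E])
next
  fix u assume "u \<in> {b \<in> XB. \<exists>c\<in>C. E b c}"
  then obtain c where c: "c \<in> C" "u \<in> XB" "E u c" by blast
  then have "Copy c (fX u) \<in> aux_T C" "aux_E E XB XC fX (Copy c (fX u)) (Orig u)"
    using assms by (auto simp: symp_commute[of E])
  then show "u \<in> aux_neighbours E XB XC fX (aux_T C)" unfolding aux_neighbours_def by blast
qed

lemma aux_sep_branch_terminals_iff:
  assumes sym: "symp E" and fX: "\<forall>b\<in>XB. fX b \<in> {0, 1}"
    and C1: "C1 \<subseteq> XC" and C2: "C2 \<subseteq> XC" and disj: "C1 \<inter> C2 = {}"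
    and fC: "\<forall>c\<in>C1. fC c \<in> {0, 1}"
  shows "aux_sep E XB XC fX (agreeing_copies fC C1) (disagreeing_copies fC C1) (aux_T C2)
      (aux_T XC - (agreeing_copies fC C1 \<union> disagreeing_copies fC C1 \<union> aux_T C2)) S
    \<longleftrightarrow> separator3 XB E S
         {b \<in> XB. \<exists>c\<in>C1. E b c \<and> fX b = fC c}
         {b \<in> XB. \<exists>c\<in>C1. E b c \<and> fX b \<noteq> fC c}
         {b \<in> XB. \<exists>c\<in>C2. E b c}"
proof -
  let ?T = "[agreeing_copies fC C1, disagreeing_copies fC C1, aux_T C2]"
    and ?I = "{0, 1, 2 :: nat}"
  let ?N = "aux_neighbours E XB XC fX"
  note terminals = branch_terminals_subset_disjoint[OF C1 C2 disj fC]
  have union: "agreeing_copies fC C1 \<union> disagreeing_copies fC C1 \<union> aux_T C2 = \<Union>((!) ?T ` ?I)"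
    by auto
  have "aux_sep E XB XC fX (agreeing_copies fC C1) (disagreeing_copies fC C1) (aux_T C2)
      (aux_T XC - \<Union>((!) ?T ` ?I)) S
    \<longleftrightarrow> (\<forall>i\<in>?I. \<forall>j\<in>?I. i \<noteq> j \<longrightarrow> separates XB E S (?N (?T ! i)) (?N (?T ! j)))"
    unfolding aux_sep_def separator3_iff_pairwise[OF symp_aux_E[OF sym]]
    by (rule aux_pairwise_separation_iff) (use terminals in auto)
  also have "\<dots> \<longleftrightarrow> separator3 XB E S
         {b \<in> XB. \<exists>c\<in>C1. E b c \<and> fX b = fC c}
         {b \<in> XB. \<exists>c\<in>C1. E b c \<and> fX b \<noteq> fC c}
         {b \<in> XB. \<exists>c\<in>C2. E b c}"
    unfolding separator3_iff_pairwise[OF sym]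
    by (simp add: aux_neighbours_agreeing_copies[OF C1 sym]
      aux_neighbours_disagreeing_copies[OF C1 sym fX fC] aux_neighbours_aux_T[OF C2 sym fX])
  finally show ?thesis unfolding union by simp
qed

theorem mainTheorem15:
  fixes V :: "'a set" and E :: "'a \<Rightarrow> 'a \<Rightarrow> bool"
    and XB XC XR Bstar C1 C2 :: "'a set"
    and fX fC :: "'a \<Rightarrow> nat"
  assumes G: "simple_graph V E"
    and occ: "is_OCC V E XB XC XR"
    and fX: "proper_2col XB E fX"
    and Bsub: "Bstar \<subseteq> XB"
    and star: "property_star E XB XC fX Bstar"
    and C1: "C1 \<subseteq> XC" and C2: "C2 \<subseteq> XC" and disj: "C1 \<inter> C2 = {}"
    and fC: "\<forall>c\<in>C1. fC c \<in> {0, 1}"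
    and hyp: "\<exists>S. S \<subseteq> XB \<and> card S \<le> card XC \<and>
       separator3 XB E S
         {b \<in> XB. \<exists>c\<in>C1. E b c \<and> fX b = fC c}
         {b \<in> XB. \<exists>c\<in>C1. E b c \<and> fX b \<noteq> fC c}
         {b \<in> XB. \<exists>c\<in>C2. E b c}"
  shows "\<exists>S. S \<subseteq> Bstar \<and>
       separator3 XB E S
         {b \<in> XB. \<exists>c\<in>C1. E b c \<and> fX b = fC c}
         {b \<in> XB. \<exists>c\<in>C1. E b c \<and> fX b \<noteq> fC c}
         {b \<in> XB. \<exists>c\<in>C2. E b c} \<and>
       (\<forall>S'. S' \<subseteq> XB \<and>
          separator3 XB E S'
            {b \<in> XB. \<exists>c\<in>C1. E b c \<and> fX b = fC c}
            {b \<in> XB. \<exists>c\<in>C1. E b c \<and> fX b \<noteq> fC c}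
            {b \<in> XB. \<exists>c\<in>C2. E b c}
          \<longrightarrow> card S \<le> card S')"
proof -
  have sym: "symp E" using G by (auto simp: simple_graph_def intro: sympI)
  have fX01: "\<forall>b\<in>XB. fX b \<in> {0, 1}" using fX by (simp add: proper_2col_def)
  let ?T1 = "agreeing_copies fC C1" and ?T2 = "disagreeing_copies fC C1" and ?T3 = "aux_T C2"
  let ?TX = "aux_T XC - (?T1 \<union> ?T2 \<union> ?T3)"
  note iff = aux_sep_branch_terminals_iff[OF sym fX01 C1 C2 disj fC]
  have partition: "?T1 \<union> ?T2 \<union> ?T3 \<union> ?TX = aux_T XC \<and> ?T1 \<inter> ?T2 = {} \<and> ?T1 \<inter> ?T3 = {} \<and>
      ?T1 \<inter> ?TX = {} \<and> ?T2 \<inter> ?T3 = {} \<and> ?T2 \<inter> ?TX = {} \<and> ?T3 \<inter> ?TX = {}"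
    using branch_terminals_subset_disjoint[OF C1 C2 disj fC] by blast
  have small: "\<exists>S. S \<subseteq> XB \<and> card S \<le> card (aux_T XC) \<and> aux_sep E XB XC fX ?T1 ?T2 ?T3 ?TX S"
    using hyp[folded iff] card_le_card_aux_T[of XC] le_trans by blast
  then obtain S where "S \<subseteq> Bstar" "aux_sep E XB XC fX ?T1 ?T2 ?T3 ?TX S"
    "\<forall>S'. S' \<subseteq> XB \<and> aux_sep E XB XC fX ?T1 ?T2 ?T3 ?TX S' \<longrightarrow> card S \<le> card S'"
    using star[unfolded property_star_def, rule_format, OF partition small] by blast
  then show ?thesis unfolding iff by blast
qed

end
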